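(* Let $f_0:\mathbb{R}^n\to\mathbb{R}$ be locally Lipschitz continuous, let $X\subset\mathbb{R}^n$ be nonempty and compact, and for $k=1,\dots,s$ and $i=1,\dots,r_k$ let $f_{ik}:\mathbb{R}^{m_k}\times\mathbb{R}^n\to\mathbb{R}$ be continuously differentiable. Let $m=\sum_{k=1}^s m_k$, let $\bar u=(\bar u^1,\dots,\bar u^s)\in\mathbb{R}^m$ with $\bar u^k\in\mathbb{R}^{m_k}$, and for each $k$ let $\|\cdot\|_{(k)}$ be a norm on $\mathbb{R}^{m_k}$. For $\delta\in\mathbb{R}$ define \[ U(\bar u,\delta)=\Big\{(v^1,\dots,v^s)\in\mathbb{R}^m ~\Big|~ \max_{k=1,\dots,s}\|v^k-\bar u^k\|_{(k)}\le|\delta|\Big\} \] and \[ q(\delta)=\min_{x\in X}\ \max_{v\in U(\bar u,\delta)}\ f_0(x)+\sum_{k=1}^s\max_{i=1,\dots,r_k} f_{ik}(v^k,x). \] Let $M$ be the set of minimizers of $\min_{x\in X} f_0(x)+\sum_{k=1}^s\max_{i=1,\dots,r_k} f_{ik}(\bar u^k,x)$, and for $x\in\mathbb{R}^n$ let $I_k(x)=\{i \mid f_{ik}(\bar u^k,x)=\max_{j=1,\dots,r_k} f_{jk}(\bar u^k,x)\}$. Then $q$ is locally Lipschitz continuous at $0$ with local Lipschitz modulus \[ \operatorname{lip} q(0)\le\max_{\bar x\in M}\sum_{k=1}^s\sum_{i\in I_k(\bar x)}\ \max_{\|w_i^k\|_{(k)}\le 1}\big|\langle\nabla_1 f_{ik}(\bar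 u^k,\bar x),w_i^k\rangle\big|, \] where the right-hand side simplifies to $\max_{\bar x\in M}\sum_{k=1}^s\sum_{i\in I_k(\bar x)}\|\nabla_1 f_{ik}(\bar u^k,\bar x)\|_2$ when $\|\cdot\|_{(k)}=\|\cdot\|_2$ for all $k$.
   Context: $\nabla_1 f_{ik}(u^k,x)$ denotes the gradient of $f_{ik}(\cdot,x)$ at $u^k$ for fixed $x$. A function $f:\mathbb{R}^N\to[-\infty,\infty]$ is locally Lipschitz continuous at $\bar z$ if it is real-valued on a neighborhood of $\bar z$ and there exist $\kappa\in[0,\infty)$ and $\epsilon>0$ with $|f(z)-f(z')|\le\kappa\|z-z'\|_2$ whenever $\|z-\bar z\|_2\le\epsilon$, $\|z'-\bar z\|_2\le\epsilon$; it is locally Lipschitz continuous if this holds at every point. The local Lipschitz modulus is $\operatorname{lip} f(\bar z)=\limsup_{z,z'\to\bar z,\ z\ne z'}|f(z)-f(z')|/\|z-z'\|_2$. *)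

theory Defs
  imports "HOL-Analysis.Analysis" "HOL-Library.Liminf_Limsup"
begin

text \<open>Local Lipschitz continuity at a point (as in the paper; functions are real-valued
  everywhere here, so the "real-valued near zbar" clause is automatic).\<close>
definition loc_lipschitz_at :: "('a::metric_space \<Rightarrow> real) \<Rightarrow> 'a \<Rightarrow> bool" where
  "loc_lipschitz_at f zb \<longleftrightarrow>
     (\<exists>\<kappa>\<ge>0. \<exists>\<epsilon>>0. \<forall>z z'. dist z zb \<le> \<epsilon> \<longrightarrow> dist z' zb \<le> \<epsilon> \<longrightarrow>
        \<bar>f z - f z'\<bar> \<le> \<kappa> * dist z z')"

definition loc_lipschitz :: "('a::metric_space \<Rightarrow> real) \<Rightarrow> bool" where
  "loc_lipschitz f \<longleftrightarrow> (\<forall>z. loc_lipschitz_at f z)"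

definition lip_mod :: "('a::metric_space \<Rightarrow> real) \<Rightarrow> 'a \<Rightarrow> ereal" where
  "lip_mod f zb = Limsup (at (zb, zb) within {p. fst p \<noteq> snd p})
       (\<lambda>p. ereal (\<bar>f (fst p) - f (snd p)\<bar> / dist (fst p) (snd p)))"

definition C1 :: "('a::real_normed_vector \<Rightarrow> 'b::real_normed_vector) \<Rightarrow> bool" where
  "C1 g \<longleftrightarrow> (\<exists>g'. (\<forall>p. (g has_derivative blinfun_apply (g' p)) (at p)) \<and> continuous_on UNIV g')"

text \<open>Block structure: R^m = real^'m, whose coordinates are partitioned into blocks by
  blk :: 'm \<Rightarrow> nat (block k consists of the coordinates j with blk j = k).
  The block space R^{m_k} is identified with the coordinate subspace of real^'m
  supported on block k, and v^k with the projection of v onto that subspace.\<close>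
definition blockspace :: "('m \<Rightarrow> nat) \<Rightarrow> nat \<Rightarrow> (real^'m) set" where
  "blockspace blk k = {v. \<forall>j. blk j \<noteq> k \<longrightarrow> v $ j = 0}"

definition blockproj :: "('m \<Rightarrow> nat) \<Rightarrow> nat \<Rightarrow> real^'m \<Rightarrow> real^'m" where
  "blockproj blk k v = (\<chi> j. if blk j = k then v $ j else 0)"

definition is_norm_on :: "'a::real_vector set \<Rightarrow> ('a \<Rightarrow> real) \<Rightarrow> bool" where
  "is_norm_on V N \<longleftrightarrow>
     (\<forall>v\<in>V. N v \<ge> 0 \<and> (N v = 0 \<longleftrightarrow> v = 0)) \<and>
     (\<forall>v\<in>V. \<forall>c. N (c *\<^sub>R v) = \<bar>c\<bar> * N v) \<and>
     (\<forall>v\<in>V. \<forall>w\<in>V. N (v + w) \<le> N v + N w)"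

definition grad :: "(real^'m \<Rightarrow> real) \<Rightarrow> real^'m \<Rightarrow> real^'m" where
  "grad g u = (\<chi> j. frechet_derivative g (at u) (axis j 1))"

end

theory Submission
  imports Defs
begin

text \<open>
  Fix a minimizer xbar in M. Near (ubar, xbar) only the active indices I k xbar contribute to
  the inner maxima, and the partial derivatives of the f i k stay close to their values at
  (ubar, xbar). The mean value theorem then shows that v \<mapsto> \<phi> v x is Lipschitz near ubar, with
  respect to the block norms N k, with constant B + \<epsilon>: the dual norm of a derivative is the
  Lipschitz constant of the corresponding linear map. A Lebesgue number of the compact set M
  makes this uniform for x close to M.
  Almost minimizers x in the definition of q \<delta>' lie close to M, and the radial retraction of
  U \<delta> onto U \<delta>' moves every point by at most \<bar>\<bar>\<delta>\<bar> - \<bar>\<delta>'\<bar>\<bar> in each block norm. Hence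
  q \<delta> \<le> q \<delta>' + (B + \<epsilon>) \<bar>\<delta> - \<delta>'\<bar> for small \<delta>, \<delta>', which gives both claims about q.
  For Euclidean block norms the dual norm of v \<mapsto> f i k (proj k v) xbar is the Euclidean norm
  of its gradient, because that gradient lies in block k.
\<close>

section \<open>Finite maxima, compactness and Lipschitz moduli\<close>

lemma continuous_on_Max_image:
  fixes g :: "'i \<Rightarrow> 'a::topological_space \<Rightarrow> 'b::linorder_topology"
  assumes "finite A" "A \<noteq> {}" "\<And>i. i \<in> A \<Longrightarrow> continuous_on S (g i)"
  shows "continuous_on S (\<lambda>x. Max ((\<lambda>i. g i x) ` A))"
  using assms
proof (induction A rule: finite_ne_induct)
  case (insert a A)
  have "continuous_on S (\<lambda>x. max (g a x) (Max ((\<lambda>i. g i x) ` A)))"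
    using insert by (intro continuous_on_max) auto
  then show ?case using insert by (simp add: Max_insert)
qed simp

lemma abs_Max_image_diff_le_sum:
  fixes a b :: "'i \<Rightarrow> real"
  assumes "finite A" "A \<noteq> {}"
  shows "\<bar>Max (a ` A) - Max (b ` A)\<bar> \<le> (\<Sum>i\<in>A. \<bar>a i - b i\<bar>)"
proof -
  have one_sided: "Max (c ` A) - Max (d ` A) \<le> (\<Sum>i\<in>A. \<bar>c i - d i\<bar>)" for c d :: "'i \<Rightarrow> real"
  proof -
    have "Max (c ` A) \<in> c ` A" using assms by (intro Max_in) auto
    then obtain i where i: "i \<in> A" "Max (c ` A) = c i" by auto
    have "d i \<le> Max (d ` A)" using i assms by simp
    moreover have "\<bar>c i - d i\<bar> \<le> (\<Sum>i\<in>A. \<bar>c i - d i\<bar>)"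
      using i assms by (intro member_le_sum) auto
    ultimately show ?thesis using i by linarith
  qed
  show ?thesis
    using one_sided[of a b] one_sided[of b a] by (simp add: abs_minus_commute)
qed

lemma Max_image_eq_Max_dominating_subset:
  fixes g :: "'i \<Rightarrow> 'a::linorder"
  assumes "finite A" "J \<subseteq> A" "J \<noteq> {}" "\<And>i. i \<in> A - J \<Longrightarrow> \<exists>j\<in>J. g i \<le> g j"
  shows "Max (g ` A) = Max (g ` J)"
proof (rule antisym)
  have "Max (g ` A) \<in> g ` A" using assms by (intro Max_in) auto
  then obtain i where i: "i \<in> A" "Max (g ` A) = g i" by auto
  then obtain j where "j \<in> J" "g i \<le> g j" using assms(4) by (cases "i \<in> J") auto
  moreover have "finite J" using assms finite_subset by blast
  ultimately show "Max (g ` A) \<le> Max (g ` J)"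
    using i by (metis Max_ge finite_imageI image_eqI order_trans)
  show "Max (g ` J) \<le> Max (g ` A)"
    using assms by (intro Max_mono) auto
qed

lemma eventually_nhds_Pair_dist:
  fixes a :: "'a::metric_space" and b :: "'b::metric_space"
  assumes "eventually P (nhds (a, b))"
  obtains d where "d > 0" "\<And>x y. dist x a < d \<Longrightarrow> dist y b < d \<Longrightarrow> P (x, y)"
proof -
  obtain d where d: "d > 0" "\<And>p. dist p (a, b) < d \<Longrightarrow> P p"
    using assms unfolding eventually_nhds_metric by blast
  have "P (x, y)" if "dist x a < d / 2" "dist y b < d / 2" for x y
  proof -
    have "dist (x, y) (a, b) \<le> \<bar>dist x a\<bar> + \<bar>dist y b\<bar>"
      unfolding dist_Pair_Pair by (rule sqrt_sum_squares_le_sum_abs)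
    then show ?thesis using that d by simp
  qed
  then show thesis using d by (intro that[of "d / 2"]) auto
qed

lemma loc_lipschitz_imp_continuous:
  assumes "loc_lipschitz f"
  shows "continuous_on UNIV f"
proof -
  have "isCont f z" for z
  proof -
    obtain \<kappa> \<epsilon> where "\<kappa> \<ge> 0" "\<epsilon> > 0"
      and lip: "\<And>a b. dist a z \<le> \<epsilon> \<Longrightarrow> dist b z \<le> \<epsilon> \<Longrightarrow> \<bar>f a - f b\<bar> \<le> \<kappa> * dist a b"
      using assms unfolding loc_lipschitz_def loc_lipschitz_at_def by blast
    have "\<kappa>-lipschitz_on (cball z \<epsilon>) f"
      using lip \<open>\<kappa> \<ge> 0\<close> by (intro lipschitz_onI) (auto simp: dist_real_def dist_commute)
    then show ?thesis
      using \<open>\<epsilon> > 0\<close>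
      by (intro continuous_on_interior[of "cball z \<epsilon>"] lipschitz_on_continuous_on)
        (auto simp: mem_interior)
  qed
  then show ?thesis by (simp add: continuous_at_imp_continuous_on)
qed

lemma loc_lipschitz_atI:
  fixes f :: "'a::metric_space \<Rightarrow> real"
  assumes "K \<ge> 0" "\<rho> > 0"
    and "\<And>z z'. dist z a \<le> \<rho> \<Longrightarrow> dist z' a \<le> \<rho> \<Longrightarrow> f z - f z' \<le> K * dist z z'"
  shows "loc_lipschitz_at f a"
  unfolding loc_lipschitz_at_def
proof (intro exI conjI allI impI)
  fix z z' assume "dist z a \<le> \<rho>" "dist z' a \<le> \<rho>"
  then show "\<bar>f z - f z'\<bar> \<le> K * dist z z'"
    using assms(3)[of z z'] assms(3)[of z' z] by (simp add: dist_commute)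
qed (use assms in auto)

lemma lip_mod_le:
  fixes f :: "'a::metric_space \<Rightarrow> real"
  assumes "\<And>\<epsilon>. \<epsilon> > 0 \<Longrightarrow> \<exists>\<rho>>0. \<forall>z z'. dist z a \<le> \<rho> \<longrightarrow> dist z' a \<le> \<rho> \<longrightarrow>
             f z - f z' \<le> (B + \<epsilon>) * dist z z'"
  shows "lip_mod f a \<le> ereal B"
proof (rule ereal_le_epsilon2)
  fix \<epsilon> :: real assume "\<epsilon> > 0"
  then obtain \<rho> where "\<rho> > 0"
    and lip: "\<And>z z'. dist z a \<le> \<rho> \<Longrightarrow> dist z' a \<le> \<rho> \<Longrightarrow> f z - f z' \<le> (B + \<epsilon>) * dist z z'"
    using assms by blast
  have "eventually (\<lambda>p. ereal (\<bar>f (fst p) - f (snd p)\<bar> / dist (fst p) (snd p)) \<le> ereal B + ereal \<epsilon>)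
      (at (a, a) within {p. fst p \<noteq> snd p})"
    unfolding eventually_at
  proof (intro exI[of _ \<rho>] conjI ballI impI)
    fix p :: "'a \<times> 'a" assume "p \<in> {p. fst p \<noteq> snd p}" "p \<noteq> (a, a) \<and> dist p (a, a) < \<rho>"
    moreover obtain z z' where "p = (z, z')" by force
    ultimately have "z \<noteq> z'" "dist z a \<le> \<rho>" "dist z' a \<le> \<rho>"
      using dist_fst_le[of p "(a, a)"] dist_snd_le[of p "(a, a)"] by auto
    then have "\<bar>f z - f z'\<bar> \<le> (B + \<epsilon>) * dist z z'" "dist z z' > 0"
      using lip[of z z'] lip[of z' z] by (auto simp: dist_commute)
    then show "ereal (\<bar>f (fst p) - f (snd p)\<bar> / dist (fst p) (snd p)) \<le> ereal B + ereal \<epsilon>"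
      using \<open>p = (z, z')\<close> by (simp add: divide_le_eq)
  qed (fact \<open>\<rho> > 0\<close>)
  then show "lip_mod f a \<le> ereal B + ereal \<epsilon>"
    unfolding lip_mod_def by (rule Limsup_bounded)
qed

lemma almost_minimizers_near_minimizers:
  fixes g :: "'a::metric_space \<Rightarrow> real"
  assumes "compact X" "continuous_on X g" "e > 0" "x0 \<in> X" "\<forall>y\<in>X. g x0 \<le> g y"
  shows "\<exists>\<eta>>0. \<forall>x\<in>X. g x < g x0 + \<eta> \<longrightarrow> (\<exists>m\<in>{m\<in>X. \<forall>y\<in>X. g m \<le> g y}. dist x m < e)"
proof -
  let ?G = "\<Union>m\<in>{m\<in>X. \<forall>y\<in>X. g m \<le> g y}. ball m e"
  show ?thesis
  proof (cases "X - ?G = {}")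
    case True
    then have "\<forall>x\<in>X. \<exists>m\<in>{m\<in>X. \<forall>y\<in>X. g m \<le> g y}. dist x m < e"
      by (fastforce simp: dist_commute)
    then show ?thesis by (intro exI[of _ 1]) simp
  next
    case False
    have "compact (X - ?G)" by (intro compact_diff assms(1) open_UN ballI open_ball)
    then obtain z where z: "z \<in> X - ?G" "\<And>y. y \<in> X - ?G \<Longrightarrow> g z \<le> g y"
      using continuous_attains_inf[OF _ False continuous_on_subset[OF assms(2)]] by blast
    then have "\<not> (\<forall>y\<in>X. g z \<le> g y)" using \<open>e > 0\<close> by force
    then have "g z > g x0" using assms(5) by force
    moreover have "\<exists>m\<in>{m\<in>X. \<forall>y\<in>X. g m \<le> g y}. dist x m < e" if "x \<in> X" "g x < g z" for x
    proof -
      have "x \<in> ?G" using z(2)[of x] that by force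
      then show ?thesis by (auto simp: dist_commute)
    qed
    ultimately show ?thesis by (intro exI[of _ "g z - g x0"]) auto
  qed
qed

lemma compact_uniform_ball_radius:
  fixes S :: "'a::euclidean_space set"
  assumes "compact S" "\<forall>xb\<in>S. \<exists>\<rho>>0. Q xb \<rho>"
  shows "\<exists>e>0. \<forall>xm\<in>S. \<exists>xb\<in>S. \<exists>\<rho>. Q xb \<rho> \<and> dist xm xb + e \<le> \<rho>"
proof -
  from bchoice[OF assms(2)] obtain \<rho> where \<rho>: "\<forall>xb\<in>S. \<rho> xb > 0 \<and> Q xb (\<rho> xb)" by blast
  obtain e where "e > 0" and lebesgue: "\<And>x. x \<in> S \<Longrightarrow> \<exists>G\<in>(\<lambda>xb. ball xb (\<rho> xb)) ` S. ball x e \<subseteq> G"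
  proof (rule Heine_Borel_lemma[OF assms(1), of "(\<lambda>xb. ball xb (\<rho> xb)) ` S"])
    show "S \<subseteq> \<Union> ((\<lambda>xb. ball xb (\<rho> xb)) ` S)" using \<rho> by force
  qed auto
  have "\<exists>xb\<in>S. \<exists>\<rho>. Q xb \<rho> \<and> dist xm xb + e \<le> \<rho>" if xm: "xm \<in> S" for xm
  proof -
    obtain xb where xb: "xb \<in> S" "ball xm e \<subseteq> ball xb (\<rho> xb)" using lebesgue[OF xm] by blast
    then have "dist xm xb + e \<le> \<rho> xb" using \<open>e > 0\<close> by (simp add: ball_subset_ball_iff)
    then show ?thesis using \<rho> xb(1) by blast
  qed
  then show ?thesis using \<open>e > 0\<close> by blast
qed

section \<open>Norms on coordinate blocks\<close>

lemma blockproj_in_blockspace: "blockproj blk k v \<in> blockspace blk k"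
  by (simp add: blockproj_def blockspace_def)

lemma blockproj_blockspace: "w \<in> blockspace blk k \<Longrightarrow> blockproj blk k w = w"
  by (auto simp: blockproj_def blockspace_def vec_eq_iff)

lemma blockproj_idem [simp]: "blockproj blk k (blockproj blk k v) = blockproj blk k v"
  by (rule blockproj_blockspace[OF blockproj_in_blockspace])

lemma linear_blockproj: "linear (blockproj blk k)"
  by (auto simp: blockproj_def vec_eq_iff intro!: linearI)

lemma blockproj_add: "blockproj blk k (a + b) = blockproj blk k a + blockproj blk k b"
  by (rule linear_add[OF linear_blockproj])

lemma blockproj_diff: "blockproj blk k (a - b) = blockproj blk k a - blockproj blk k b"
  by (rule linear_diff[OF linear_blockproj])

lemma blockproj_scaleR: "blockproj blk k (c *\<^sub>R a) = c *\<^sub>R blockproj blk k a"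
  by (rule linear_scale[OF linear_blockproj])

lemma blockproj_0: "blockproj blk k 0 = 0"
  by (rule linear_0[OF linear_blockproj])

lemma norm_blockproj_le: "norm (blockproj blk k v) \<le> norm v"
  by (rule norm_le_componentwise_cart) (simp add: blockproj_def)

lemma sum_blockproj:
  assumes "finite K" "\<And>j. blk j \<in> K"
  shows "(\<Sum>k\<in>K. blockproj blk k v) = v"
  using assms by (simp add: vec_eq_iff blockproj_def if_distrib sum.delta' cong: if_cong)

lemma subspace_blockspace: "subspace (blockspace blk k)"
  by (simp add: subspace_def blockspace_def)

context
  fixes V :: "'a::real_vector set" and N :: "'a \<Rightarrow> real"
  assumes norm_on: "is_norm_on V N" and subsp: "subspace V"
begin

lemma is_norm_on_nonneg: "w \<in> V \<Longrightarrow> N w \<ge> 0"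
  using norm_on by (simp add: is_norm_on_def)

lemma is_norm_on_eq_0: "w \<in> V \<Longrightarrow> N w = 0 \<longleftrightarrow> w = 0"
  using norm_on by (simp add: is_norm_on_def)

lemma is_norm_on_0: "N 0 = 0"
  using is_norm_on_eq_0 subspace_0[OF subsp] by blast

lemma is_norm_on_scaleR: "w \<in> V \<Longrightarrow> N (c *\<^sub>R w) = \<bar>c\<bar> * N w"
  using norm_on by (simp add: is_norm_on_def)

lemma is_norm_on_triangle: "a \<in> V \<Longrightarrow> b \<in> V \<Longrightarrow> N (a + b) \<le> N a + N b"
  using norm_on by (simp add: is_norm_on_def)

lemma is_norm_on_minus_commute: "a \<in> V \<Longrightarrow> b \<in> V \<Longrightarrow> N (a - b) = N (b - a)"
  using is_norm_on_scaleR[of "b - a" "-1"] subspace_diff[OF subsp] by simp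

lemma is_norm_on_reverse_triangle: "a \<in> V \<Longrightarrow> b \<in> V \<Longrightarrow> \<bar>N a - N b\<bar> \<le> N (a - b)"
  using is_norm_on_triangle[of "a - b" b] is_norm_on_triangle[of "b - a" a]
    is_norm_on_minus_commute[of a b] subspace_diff[OF subsp]
  by (simp add: abs_le_iff)

lemma is_norm_on_sum_le:
  "finite J \<Longrightarrow> (\<And>j. j \<in> J \<Longrightarrow> u j \<in> V) \<Longrightarrow> N (\<Sum>j\<in>J. u j) \<le> (\<Sum>j\<in>J. N (u j))"
proof (induction J rule: finite_induct)
  case (insert j J)
  then have "N (u j + sum u J) \<le> N (u j) + N (sum u J)"
    by (intro is_norm_on_triangle subspace_sum[OF subsp]) auto
  then show ?case using insert by simp
qed (simp add: is_norm_on_0)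

end

lemma blockspace_norm_le_norm:
  assumes "is_norm_on (blockspace blk k) N"
  obtains C where "C \<ge> 0" "\<And>w. w \<in> blockspace blk k \<Longrightarrow> N w \<le> C * norm w"
proof -
  let ?V = "blockspace blk k" and ?J = "{j. blk j = k}"
  note norm_on = assms subspace_blockspace
  have axis_in: "axis j 1 \<in> ?V" if "j \<in> ?J" for j
    using that by (auto simp: blockspace_def axis_def)
  define C where "C = (\<Sum>j\<in>?J. N (axis j 1))"
  have "N w \<le> C * norm w" if w: "w \<in> ?V" for w
  proof -
    have "w = (\<Sum>j\<in>?J. w $ j *\<^sub>R axis j 1)"
      using w by (auto simp: vec_eq_iff blockspace_def axis_def if_distrib sum.delta' cong: if_cong)
    moreover have "N (\<Sum>j\<in>?J. w $ j *\<^sub>R axis j 1) \<le> (\<Sum>j\<in>?J. N (w $ j *\<^sub>R axis j 1))"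
      by (intro is_norm_on_sum_le[OF norm_on] subspace_scale[OF subspace_blockspace] axis_in) auto
    ultimately have "N w \<le> (\<Sum>j\<in>?J. N (w $ j *\<^sub>R axis j 1))" by simp
    also have "\<dots> = (\<Sum>j\<in>?J. \<bar>w $ j\<bar> * N (axis j 1))"
      using is_norm_on_scaleR[OF norm_on] axis_in by (intro sum.cong) auto
    also have "\<dots> \<le> (\<Sum>j\<in>?J. norm w * N (axis j 1))"
      using axis_in is_norm_on_nonneg[OF norm_on] component_le_norm_cart
      by (intro sum_mono mult_right_mono) auto
    also have "\<dots> = C * norm w" unfolding C_def by (simp add: sum_distrib_left mult.commute)
    finally show ?thesis .
  qed
  moreover have "C \<ge> 0"
    unfolding C_def using axis_in is_norm_on_nonneg[OF norm_on] by (intro sum_nonneg) auto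
  ultimately show thesis using that by blast
qed

lemma continuous_on_blockspace_norm:
  assumes "is_norm_on (blockspace blk k) N"
  shows "continuous_on (blockspace blk k) N"
proof -
  let ?V = "blockspace blk k"
  note norm_on = assms subspace_blockspace
  obtain C where C: "C \<ge> 0" "\<And>w. w \<in> ?V \<Longrightarrow> N w \<le> C * norm w"
    using blockspace_norm_le_norm[OF assms] by blast
  have "C-lipschitz_on ?V N"
  proof (intro lipschitz_onI C(1))
    fix x y assume "x \<in> ?V" "y \<in> ?V"
    then have "\<bar>N x - N y\<bar> \<le> C * norm (x - y)"
      using is_norm_on_reverse_triangle[OF norm_on, of x y] C(2)[of "x - y"]
        subspace_diff[OF subspace_blockspace[of blk k], of x y]
      by auto
    then show "dist (N x) (N y) \<le> C * dist x y" by (simp add: dist_norm dist_real_def)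
  qed
  then show ?thesis by (rule lipschitz_on_continuous_on)
qed

text \<open>N attains a positive minimum on the compact Euclidean unit sphere of the block.\<close>
lemma blockspace_norm_ge_norm:
  assumes "is_norm_on (blockspace blk k) N"
  shows "\<exists>c>0. \<forall>w\<in>blockspace blk k. c * norm w \<le> N w"
proof -
  let ?V = "blockspace blk k"
  let ?S = "?V \<inter> sphere 0 1"
  note norm_on = assms subspace_blockspace
  have cont: "continuous_on ?S N"
    by (rule continuous_on_subset[OF continuous_on_blockspace_norm[OF assms]]) blast
  have cpt: "compact ?S"
    by (intro closed_Int_compact closed_subspace subspace_blockspace compact_sphere)
  have normalize: "(1 / norm w) *\<^sub>R w \<in> ?S" if "w \<in> ?V" "w \<noteq> 0" for w
    using that subspace_scale[OF subspace_blockspace] by auto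
  have scale_bound: "c * norm w \<le> N w"
    if "\<forall>y\<in>?S. c \<le> N y" "w \<in> ?V" for c w
  proof (cases "w = 0")
    case False
    then have "c \<le> N ((1 / norm w) *\<^sub>R w)" using that normalize by blast
    also have "\<dots> = N w / norm w" using is_norm_on_scaleR[OF norm_on that(2)] by simp
    finally show ?thesis using False by (simp add: field_simps)
  qed (simp add: is_norm_on_0[OF norm_on])
  show ?thesis
  proof (cases "?S = {}")
    case True
    then have "\<forall>y\<in>?S. 1 \<le> N y" by blast
    then show ?thesis using scale_bound[of 1] by (intro exI[of _ 1]) auto
  next
    case False
    obtain m where m: "m \<in> ?S" "\<And>y. y \<in> ?S \<Longrightarrow> N m \<le> N y"
      using continuous_attains_inf[OF cpt False cont] by blast
    then have "N m > 0"
      using is_norm_on_nonneg[OF norm_on] is_norm_on_eq_0[OF norm_on] by force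
    then show ?thesis using scale_bound m(2) by (intro exI[of _ "N m"]) auto
  qed
qed

section \<open>Dual norms\<close>

definition dual_norm :: "'a::real_vector set \<Rightarrow> ('a \<Rightarrow> real) \<Rightarrow> ('a \<Rightarrow> real) \<Rightarrow> real" where
  "dual_norm V N L = (SUP w\<in>{w\<in>V. N w \<le> 1}. \<bar>L w\<bar>)"

context
  fixes V :: "'a::real_normed_vector set" and N :: "'a \<Rightarrow> real" and L :: "'a \<Rightarrow> real" and c :: real
  assumes norm_on: "is_norm_on V N" and subsp: "subspace V"
    and c_pos: "c > 0" and c_le: "\<And>w. w \<in> V \<Longrightarrow> c * norm w \<le> N w"
    and lin: "bounded_linear L"
begin

lemma abs_le_on_dual_ball:
  assumes "\<And>w. \<bar>L w\<bar> \<le> K * norm w" "K \<ge> 0" "w \<in> V" "N w \<le> 1"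
  shows "\<bar>L w\<bar> \<le> K / c"
proof -
  have "norm w \<le> 1 / c" using c_le[OF assms(3)] assms(4) c_pos by (simp add: field_simps)
  then have "K * norm w \<le> K * (1 / c)" using assms(2) by (rule mult_left_mono)
  then show ?thesis using assms(1)[of w] by simp
qed

lemma bdd_above_dual_ball: "bdd_above ((\<lambda>w. \<bar>L w\<bar>) ` {w\<in>V. N w \<le> 1})"
proof -
  obtain K where "K \<ge> 0" "\<And>w. norm (L w) \<le> norm w * K"
    using bounded_linear.nonneg_bounded[OF lin] by blast
  then show ?thesis
    using abs_le_on_dual_ball[of K] by (intro bdd_aboveI2[of _ _ "K / c"]) (auto simp: mult.commute)
qed

lemma dual_norm_le:
  assumes "\<And>w. \<bar>L w\<bar> \<le> K * norm w" "K \<ge> 0"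
  shows "dual_norm V N L \<le> K / c"
  unfolding dual_norm_def
  using subspace_0[OF subsp] is_norm_on_0[OF norm_on subsp] abs_le_on_dual_ball[OF assms]
  by (intro cSUP_least) auto

lemma abs_le_dual_norm_of_le_1: "w \<in> V \<Longrightarrow> N w \<le> 1 \<Longrightarrow> \<bar>L w\<bar> \<le> dual_norm V N L"
  unfolding dual_norm_def using bdd_above_dual_ball by (intro cSUP_upper) auto

lemma dual_norm_nonneg: "dual_norm V N L \<ge> 0"
  using abs_le_dual_norm_of_le_1[of 0] subspace_0[OF subsp] is_norm_on_0[OF norm_on subsp]
  by simp

lemma abs_le_dual_norm:
  assumes "h \<in> V"
  shows "\<bar>L h\<bar> \<le> dual_norm V N L * N h"
proof (cases "h = 0")
  case True
  then show ?thesis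
    using linear_0[OF bounded_linear.linear[OF lin]] is_norm_on_0[OF norm_on subsp] by simp
next
  case False
  then have pos: "N h > 0"
    using assms is_norm_on_nonneg[OF norm_on subsp] is_norm_on_eq_0[OF norm_on subsp] by force
  have "\<bar>L ((1 / N h) *\<^sub>R h)\<bar> \<le> dual_norm V N L"
    using assms pos is_norm_on_scaleR[OF norm_on subsp assms]
    by (intro abs_le_dual_norm_of_le_1 subspace_scale[OF subsp]) auto
  then show ?thesis
    using pos linear_scale[OF bounded_linear.linear[OF lin]] by (simp add: field_simps abs_div)
qed

end

section \<open>Partial derivatives and gradients\<close>

lemma bounded_linear_blinfun_apply_Pair_0:
  "bounded_linear (\<lambda>w. blinfun_apply A (w, 0::'b::real_normed_vector))"
  by (intro bounded_linear_compose[OF blinfun.bounded_linear_right] bounded_linear_Pair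
      bounded_linear_ident bounded_linear_zero)

context
  fixes F :: "'a::real_normed_vector \<times> 'b::real_normed_vector \<Rightarrow> real"
    and D :: "'a \<times> 'b \<Rightarrow> ('a \<times> 'b) \<Rightarrow>\<^sub>L real"
  assumes has_derivative_F: "\<And>p. (F has_derivative blinfun_apply (D p)) (at p)"
begin

lemma has_derivative_partial_fst:
  "((\<lambda>v. F (v, x)) has_derivative (\<lambda>w. D (v0, x) (w, 0))) (at v0)"
proof -
  have "((\<lambda>v. (v, x)) has_derivative (\<lambda>w. (w, 0))) (at v0)"
    by (auto intro!: derivative_eq_intros)
  from has_derivative_compose[OF this has_derivative_F] show ?thesis by simp
qed

lemma frechet_derivative_partial_fst:
  "frechet_derivative (\<lambda>v. F (v, x)) (at v0) = (\<lambda>w. D (v0, x) (w, 0))"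
  using frechet_derivative_at[OF has_derivative_partial_fst] by simp

lemma abs_increment_le_near_derivative:
  assumes "\<And>t. 0 \<le> t \<Longrightarrow> t \<le> 1 \<Longrightarrow> norm (D (v + t *\<^sub>R h, x) - D0) \<le> \<eta>"
  shows "\<bar>F (v + h, x) - F (v, x)\<bar> \<le> \<bar>D0 (h, 0)\<bar> + \<eta> * norm h"
proof -
  define g where "g t = F (v + t *\<^sub>R h, x)" for t
  have g_deriv: "(g has_derivative (\<lambda>s. D (v + t *\<^sub>R h, x) (s *\<^sub>R h, 0))) (at t within S)" for t S
  proof -
    have "((\<lambda>t. (v + t *\<^sub>R h, x)) has_derivative (\<lambda>s. (s *\<^sub>R h, 0))) (at t within S)"
      by (auto intro!: derivative_eq_intros)
    from has_derivative_compose[OF this has_derivative_F] show ?thesis unfolding g_def by simp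
  qed
  have "continuous_on {0..1} g" by (rule has_derivative_continuous_on[OF g_deriv])
  then obtain t where t: "t \<in> {0<..<1}" "norm (g 1 - g 0) \<le> norm (D (v + t *\<^sub>R h, x) ((1 - 0) *\<^sub>R h, 0))"
    using mvt_general[OF zero_less_one _ g_deriv] by blast
  let ?Dt = "D (v + t *\<^sub>R h, x)"
  have "\<bar>?Dt (h, 0)\<bar> \<le> \<bar>D0 (h, 0)\<bar> + \<bar>(?Dt - D0) (h, 0)\<bar>"
    by (simp add: blinfun.diff_left)
  also have "\<bar>(?Dt - D0) (h, 0)\<bar> \<le> norm (?Dt - D0) * norm (h, 0::'b)"
    using norm_blinfun[of "?Dt - D0" "(h, 0)"] by simp
  also have "\<dots> \<le> \<eta> * norm h"
    using assms[of t] t(1) by (simp add: norm_Pair mult_right_mono)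
  finally show ?thesis using t(2) unfolding g_def by simp
qed

end

lemma frechet_derivative_eq_inner_grad:
  fixes G :: "real^'m \<Rightarrow> real"
  assumes "(G has_derivative L) (at u)"
  shows "frechet_derivative G (at u) w = grad G u \<bullet> w"
proof -
  have L: "frechet_derivative G (at u) = L" using frechet_derivative_at[OF assms] by simp
  have lin: "linear L" using has_derivative_linear[OF assms] .
  have "L w = L (\<Sum>j\<in>UNIV. w $ j *\<^sub>R axis j 1)"
    using basis_expansion[of w] by (simp add: scalar_mult_eq_scaleR)
  also have "\<dots> = (\<Sum>j\<in>UNIV. w $ j * L (axis j 1))"
    by (simp add: linear_sum[OF lin] linear_scale[OF lin])
  also have "\<dots> = grad G u \<bullet> w"
    by (simp add: inner_vec_def grad_def L mult.commute)
  finally show ?thesis using L by simp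
qed

lemma grad_in_blockspace:
  fixes G :: "real^'m \<Rightarrow> real"
  assumes der: "(G has_derivative L) (at u)" and factors: "\<And>v. G (blockproj blk k v) = G v"
  shows "grad G u \<in> blockspace blk k"
  unfolding blockspace_def
proof (intro CollectI allI impI)
  fix j assume "blk j \<noteq> k"
  then have "blockproj blk k (axis j 1) = 0" by (auto simp: blockproj_def vec_eq_iff axis_def)
  then have const: "G (u + t *\<^sub>R axis j 1) = G u" for t
    using factors[of u] factors[of "u + t *\<^sub>R axis j 1"]
    by (simp add: blockproj_add blockproj_scaleR)
  have "((\<lambda>t. u + t *\<^sub>R axis j 1) has_derivative (\<lambda>t. t *\<^sub>R axis j 1)) (at 0)"
    by (auto intro!: derivative_eq_intros)
  from has_derivative_compose[OF this, of G L] der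
  have "((\<lambda>t::real. G u) has_derivative (\<lambda>t. L (t *\<^sub>R axis j 1))) (at 0)"
    by (simp add: const)
  then have "(\<lambda>t. L (t *\<^sub>R axis j 1)) = (\<lambda>t. 0)"
    using has_derivative_const by (rule has_derivative_unique)
  then have "L (axis j 1) = 0" by (metis scaleR_one)
  then show "grad G u $ j = 0"
    using frechet_derivative_at[OF der] by (simp add: grad_def)
qed

lemma SUP_abs_inner_unit_ball_subspace:
  fixes g :: "'a::real_inner"
  assumes "subspace V" "g \<in> V"
  shows "(SUP w\<in>{w\<in>V. norm w \<le> 1}. \<bar>g \<bullet> w\<bar>) = norm g"
proof (rule antisym)
  let ?W = "{w\<in>V. norm w \<le> 1}"
  have le: "\<bar>g \<bullet> w\<bar> \<le> norm g" if "w \<in> ?W" for w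
    using Cauchy_Schwarz_ineq2[of g w] mult_left_mono[of "norm w" 1 "norm g"] that by simp
  define w0 where "w0 = (1 / norm g) *\<^sub>R g"
  have w0: "w0 \<in> ?W" "\<bar>g \<bullet> w0\<bar> = norm g"
    using subspace_scale[OF assms] unfolding w0_def
    by (cases "g = 0"; simp add: power2_norm_eq_inner[symmetric] power2_eq_square)+
  show "(SUP w\<in>?W. \<bar>g \<bullet> w\<bar>) \<le> norm g" using w0(1) le by (intro cSUP_least) auto
  have "bdd_above ((\<lambda>w. \<bar>g \<bullet> w\<bar>) ` ?W)" using le by (rule bdd_aboveI2)
  then show "norm g \<le> (SUP w\<in>?W. \<bar>g \<bullet> w\<bar>)"
    using cSUP_upper[OF w0(1), of "\<lambda>w. \<bar>g \<bullet> w\<bar>"] w0(2) by simp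
qed

section \<open>The min-max value function\<close>

locale robust_minmax =
  fixes f0 :: "real^'n \<Rightarrow> real"
    and X :: "(real^'n) set"
    and s :: nat and r :: "nat \<Rightarrow> nat"
    and blk :: "'m::finite \<Rightarrow> nat"
    and f :: "nat \<Rightarrow> nat \<Rightarrow> real^'m \<Rightarrow> real^'n \<Rightarrow> real"
    and ubar :: "real^'m"
    and N :: "nat \<Rightarrow> real^'m \<Rightarrow> real"
    and U :: "real \<Rightarrow> (real^'m) set"
    and \<phi> :: "real^'m \<Rightarrow> real^'n \<Rightarrow> real"
    and q :: "real \<Rightarrow> real"
    and M :: "(real^'n) set"
    and I :: "nat \<Rightarrow> real^'n \<Rightarrow> nat set"
    and B :: real
  assumes f0_lip: "loc_lipschitz f0"
    and X_ne: "X \<noteq> {}" and X_cpt: "compact X"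
    and blk_range: "\<forall>j. blk j \<in> {1..s}"
    and r_pos: "\<forall>k\<in>{1..s}. r k \<ge> 1"
    and f_C1: "\<forall>k\<in>{1..s}. \<forall>i\<in>{1..r k}.
                 C1 (\<lambda>p::(real^'m) \<times> (real^'n). f i k (blockproj blk k (fst p)) (snd p))"
    and N_norm: "\<forall>k\<in>{1..s}. is_norm_on (blockspace blk k) (N k)"
    and U_def: "\<forall>\<delta>. U \<delta> = {v. Max ((\<lambda>k. N k (blockproj blk k (v - ubar))) ` {1..s}) \<le> \<bar>\<delta>\<bar>}"
    and \<phi>_def: "\<forall>v x. \<phi> v x = f0 x + (\<Sum>k\<in>{1..s}. Max ((\<lambda>i. f i k (blockproj blk k v) x) ` {1..r k}))"
    and q_def: "\<forall>\<delta>. q \<delta> = (INF x\<in>X. SUP v\<in>U \<delta>. \<phi> v x)"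
    and M_def: "M = {x\<in>X. \<forall>y\<in>X. \<phi> ubar x \<le> \<phi> ubar y}"
    and I_def: "\<forall>k x. I k x = {i\<in>{1..r k}. f i k (blockproj blk k ubar) x
                          = Max ((\<lambda>j. f j k (blockproj blk k ubar) x) ` {1..r k})}"
    and B_def: "B = (SUP xb\<in>M. \<Sum>k\<in>{1..s}. \<Sum>i\<in>I k xb.
                   (SUP w\<in>{w\<in>blockspace blk k. N k w \<le> 1}.
                      \<bar>frechet_derivative (\<lambda>v. f i k (blockproj blk k v) xb) (at ubar) w\<bar>))"
begin

abbreviation "proj k \<equiv> blockproj blk k"
abbreviation "block k \<equiv> blockspace blk k"

definition F :: "nat \<Rightarrow> nat \<Rightarrow> (real^'m) \<times> (real^'n) \<Rightarrow> real" where
  "F i k p = f i k (proj k (fst p)) (snd p)"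

definition DF :: "nat \<Rightarrow> nat \<Rightarrow> (real^'m) \<times> (real^'n) \<Rightarrow> ((real^'m) \<times> (real^'n)) \<Rightarrow>\<^sub>L real" where
  "DF i k = (SOME D. (\<forall>p. (F i k has_derivative blinfun_apply (D p)) (at p)) \<and> continuous_on UNIV D)"

lemma F_Pair [simp]: "F i k (v, x) = f i k (proj k v) x"
  by (simp add: F_def)

definition Fmax :: "nat \<Rightarrow> (real^'m) \<times> (real^'n) \<Rightarrow> real" where
  "Fmax k p = Max ((\<lambda>i. F i k p) ` {1..r k})"

lemma
  assumes "k \<in> {1..s}" "i \<in> {1..r k}"
  shows has_derivative_F: "(F i k has_derivative blinfun_apply (DF i k p)) (at p)"
    and continuous_on_DF: "continuous_on UNIV (DF i k)"
proof -
  have "\<exists>D. (\<forall>p. (F i k has_derivative blinfun_apply (D p)) (at p)) \<and> continuous_on UNIV D"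
    using f_C1 assms unfolding C1_def F_def by blast
  then have "(\<forall>p. (F i k has_derivative blinfun_apply (DF i k p)) (at p)) \<and> continuous_on UNIV (DF i k)"
    unfolding DF_def by (rule someI_ex)
  then show "(F i k has_derivative blinfun_apply (DF i k p)) (at p)" "continuous_on UNIV (DF i k)"
    by blast+
qed

lemma continuous_on_F: "k \<in> {1..s} \<Longrightarrow> i \<in> {1..r k} \<Longrightarrow> continuous_on S (F i k)"
  by (meson has_derivative_F has_derivative_continuous_on has_derivative_at_withinI)

lemma blocks_nonempty: "{1..s} \<noteq> {}"
  using blk_range by blast

lemma phi_eq: "\<phi> v x = f0 x + (\<Sum>k\<in>{1..s}. Fmax k (v, x))"
  using \<phi>_def by (simp add: Fmax_def)

lemma continuous_on_phi: "continuous_on S (\<lambda>p. \<phi> (fst p) (snd p))"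
proof -
  have "continuous_on S (\<lambda>p. f0 (snd p) + (\<Sum>k\<in>{1..s}. Fmax k p))"
    unfolding Fmax_def
  proof (intro continuous_intros continuous_on_Max_image)
    show "continuous_on S (\<lambda>p. f0 (snd p))"
      by (intro continuous_on_compose2[OF loc_lipschitz_imp_continuous[OF f0_lip]])
        (auto intro: continuous_intros)
  qed (use r_pos continuous_on_F in auto)
  then show ?thesis by (simp add: phi_eq)
qed

lemma continuous_on_phi_snd: "continuous_on S (\<phi> v)"
proof -
  have "continuous_on S (\<lambda>x. (\<lambda>p. \<phi> (fst p) (snd p)) (v, x))"
    by (intro continuous_on_compose2[OF continuous_on_phi[of UNIV]] continuous_intros) auto
  then show ?thesis by simp
qed

lemma minimizers: "M \<noteq> {}" "compact M" "M \<subseteq> X"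
proof -
  show "M \<noteq> {}"
    using continuous_attains_inf[OF X_cpt X_ne continuous_on_phi_snd] M_def by blast
  have "M = X \<inter> (\<Inter>y\<in>X. {x. \<phi> ubar x \<le> \<phi> ubar y})" using M_def by auto
  moreover have "closed (\<Inter>y\<in>X. {x. \<phi> ubar x \<le> \<phi> ubar y})"
    by (intro closed_INT ballI closed_Collect_le continuous_on_phi_snd continuous_on_const)
  ultimately show "compact M" using X_cpt by (simp add: compact_Int_closed)
  show "M \<subseteq> X" using M_def by auto
qed

lemma active_eq: "I k x = {i\<in>{1..r k}. F i k (ubar, x) = Fmax k (ubar, x)}"
  using I_def by (simp add: Fmax_def)

lemma active_subset: "I k x \<subseteq> {1..r k}"
  using active_eq by auto

lemma active_nonempty: "k \<in> {1..s} \<Longrightarrow> I k x \<noteq> {}"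
proof -
  assume "k \<in> {1..s}"
  then have "Fmax k (ubar, x) \<in> (\<lambda>j. F j k (ubar, x)) ` {1..r k}"
    using r_pos unfolding Fmax_def by (intro Max_in) auto
  then show ?thesis unfolding active_eq by auto
qed

lemma inactive_less_active:
  assumes "i \<in> {1..r k} - I k x" "j \<in> I k x"
  shows "F i k (ubar, x) < F j k (ubar, x)"
proof -
  have "F i k (ubar, x) \<le> Fmax k (ubar, x)" using assms(1) by (simp add: Fmax_def)
  moreover have "F i k (ubar, x) \<noteq> Fmax k (ubar, x)"
    using assms(1) unfolding active_eq by auto
  ultimately show ?thesis using assms(2) unfolding active_eq by auto
qed

lemma block_norm: "k \<in> {1..s} \<Longrightarrow> is_norm_on (block k) (N k)"
  using N_norm by blast

lemma block_norm_nonneg: "k \<in> {1..s} \<Longrightarrow> N k (proj k v) \<ge> 0"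
  by (rule is_norm_on_nonneg[OF block_norm subspace_blockspace blockproj_in_blockspace])

lemma exists_uniform_norm_equiv_const: "\<exists>c>0. \<forall>k\<in>{1..s}. \<forall>w\<in>block k. c * norm w \<le> N k w"
proof -
  have "\<forall>k\<in>{1..s}. \<exists>c>0. \<forall>w\<in>block k. c * norm w \<le> N k w"
    using blockspace_norm_ge_norm block_norm by blast
  from bchoice[OF this]
  obtain c where c: "\<forall>k\<in>{1..s}. c k > 0 \<and> (\<forall>w\<in>block k. c k * norm w \<le> N k w)"
    by blast
  let ?c = "Min (c ` {1..s})"
  have "?c * norm w \<le> N k w" if "k \<in> {1..s}" "w \<in> block k" for k w
  proof -
    have "?c \<le> c k" using that(1) by simp
    then have "?c * norm w \<le> c k * norm w" by (rule mult_right_mono) simp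
    also have "\<dots> \<le> N k w" using c that by blast
    finally show ?thesis .
  qed
  moreover have "?c > 0" using c blocks_nonempty by (simp add: Min_gr_iff)
  ultimately show ?thesis by blast
qed

definition cN :: real where
  "cN = (SOME c. c > 0 \<and> (\<forall>k\<in>{1..s}. \<forall>w\<in>block k. c * norm w \<le> N k w))"

lemma cN_pos: "cN > 0"
  and norm_le_block_norm: "k \<in> {1..s} \<Longrightarrow> w \<in> block k \<Longrightarrow> cN * norm w \<le> N k w"
proof -
  have "cN > 0 \<and> (\<forall>k\<in>{1..s}. \<forall>w\<in>block k. cN * norm w \<le> N k w)"
    unfolding cN_def by (rule someI_ex[OF exists_uniform_norm_equiv_const])
  then show "cN > 0" "k \<in> {1..s} \<Longrightarrow> w \<in> block k \<Longrightarrow> cN * norm w \<le> N k w" by blast+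
qed

definition dual :: "nat \<Rightarrow> nat \<Rightarrow> real^'n \<Rightarrow> real" where
  "dual i k x = dual_norm (block k) (N k) (\<lambda>w. DF i k (ubar, x) (w, 0))"

lemma
  assumes "k \<in> {1..s}"
  shows dual_nonneg: "dual i k x \<ge> 0"
    and abs_DF_le_dual: "h \<in> block k \<Longrightarrow> \<bar>DF i k (ubar, x) (h, 0)\<bar> \<le> dual i k x * N k h"
    and dual_le_norm_DF: "dual i k x \<le> norm (DF i k (ubar, x)) / cN"
proof -
  note hyps = block_norm[OF assms] subspace_blockspace cN_pos norm_le_block_norm[OF assms]
    bounded_linear_blinfun_apply_Pair_0[of "DF i k (ubar, x)"]
  show "dual i k x \<ge> 0" unfolding dual_def by (rule dual_norm_nonneg[OF hyps])
  show "h \<in> block k \<Longrightarrow> \<bar>DF i k (ubar, x) (h, 0)\<bar> \<le> dual i k x * N k h"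
    unfolding dual_def by (rule abs_le_dual_norm[OF hyps])
  have "\<bar>DF i k (ubar, x) (w, 0)\<bar> \<le> norm (DF i k (ubar, x)) * norm w" for w
    using norm_blinfun[of "DF i k (ubar, x)" "(w, 0)"] by (simp add: norm_Pair)
  from dual_norm_le[OF hyps this]
  show "dual i k x \<le> norm (DF i k (ubar, x)) / cN" unfolding dual_def by simp
qed

lemma B_eq_SUP_dual: "B = (SUP xb\<in>M. \<Sum>k\<in>{1..s}. \<Sum>i\<in>I k xb. dual i k xb)"
  unfolding B_def
proof (intro SUP_cong refl sum.cong)
  fix xb k i assume "k \<in> {1..s}" "i \<in> I k xb"
  then have "i \<in> {1..r k}" using active_subset by blast
  with \<open>k \<in> {1..s}\<close>
  have "frechet_derivative (\<lambda>v. F i k (v, xb)) (at ubar) = (\<lambda>w. DF i k (ubar, xb) (w, 0))"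
    by (intro frechet_derivative_partial_fst has_derivative_F)
  then show "(SUP w\<in>{w\<in>block k. N k w \<le> 1}. \<bar>frechet_derivative (\<lambda>v. f i k (proj k v) xb) (at ubar) w\<bar>)
      = dual i k xb"
    by (simp add: dual_def dual_norm_def)
qed

definition dual_sum :: "nat \<Rightarrow> real^'n \<Rightarrow> real" where
  "dual_sum k x = (\<Sum>i\<in>I k x. dual i k x)"

lemma dual_sum_nonneg: "k \<in> {1..s} \<Longrightarrow> dual_sum k x \<ge> 0"
  unfolding dual_sum_def using dual_nonneg by (intro sum_nonneg) auto

text \<open>On the compact set M the dual norms are bounded by the continuous operator norms of DF.\<close>
lemma bdd_above_dual_sum: "bdd_above ((\<lambda>xb. \<Sum>k\<in>{1..s}. dual_sum k xb) ` M)"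
proof -
  define g where "g xb = (\<Sum>k\<in>{1..s}. \<Sum>i\<in>{1..r k}. norm (DF i k (ubar, xb)) / cN)" for xb
  have "continuous_on M g" unfolding g_def
  proof (intro continuous_intros)
    fix k i assume "k \<in> {1..s}" "i \<in> {1..r k}"
    then show "continuous_on M (\<lambda>x. DF i k (ubar, x))"
      by (intro continuous_on_compose2[OF continuous_on_DF]) (auto intro: continuous_intros)
  qed (use cN_pos in auto)
  then have "bdd_above (g ` M)"
    using minimizers by (intro bounded_imp_bdd_above compact_imp_bounded compact_continuous_image)
  then obtain b where b: "\<And>xb. xb \<in> M \<Longrightarrow> g xb \<le> b" by (auto simp: bdd_above_def)
  have "(\<Sum>k\<in>{1..s}. dual_sum k xb) \<le> g xb" for xb
    unfolding g_def dual_sum_def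
  proof (intro sum_mono)
    fix k assume k: "k \<in> {1..s}"
    have "(\<Sum>i\<in>I k xb. dual i k xb) \<le> (\<Sum>i\<in>{1..r k}. dual i k xb)"
      using active_subset dual_nonneg[OF k] by (intro sum_mono2) auto
    also have "\<dots> \<le> (\<Sum>i\<in>{1..r k}. norm (DF i k (ubar, xb)) / cN)"
      using dual_le_norm_DF[OF k] by (intro sum_mono)
    finally show "(\<Sum>i\<in>I k xb. dual i k xb) \<le> (\<Sum>i\<in>{1..r k}. norm (DF i k (ubar, xb)) / cN)" .
  qed
  then show ?thesis using b by (intro bdd_aboveI2[of _ _ b]) (meson order_trans)
qed

lemma sum_dual_sum_le_B: "xb \<in> M \<Longrightarrow> (\<Sum>k\<in>{1..s}. dual_sum k xb) \<le> B"
  unfolding B_eq_SUP_dual dual_sum_def[symmetric] using bdd_above_dual_sum by (intro cSUP_upper)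

lemma B_nonneg: "B \<ge> 0"
proof -
  obtain xb where "xb \<in> M" using minimizers by blast
  then show ?thesis using sum_dual_sum_le_B[of xb] dual_sum_nonneg by (meson order_trans sum_nonneg)
qed

lemma eventually_Fmax_eq_Max_active:
  "eventually (\<lambda>p. \<forall>k\<in>{1..s}. Fmax k p = Max ((\<lambda>i. F i k p) ` I k xb))
     (nhds (ubar, xb))"
proof (intro eventually_ball_finite ballI)
  fix k assume k: "k \<in> {1..s}"
  obtain j where j: "j \<in> I k xb" using active_nonempty[OF k] by blast
  then have j_range: "j \<in> {1..r k}" using active_subset by blast
  have "eventually (\<lambda>p. \<forall>i\<in>{1..r k} - I k xb. F i k p < F j k p) (nhds (ubar, xb))"
  proof (intro eventually_ball_finite ballI)
    fix i assume i: "i \<in> {1..r k} - I k xb"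
    have "open {p. F i k p < F j k p}"
      using k i j_range by (intro open_Collect_less continuous_on_F) auto
    then show "eventually (\<lambda>p. F i k p < F j k p) (nhds (ubar, xb))"
      using eventually_nhds_in_open inactive_less_active[OF i j] by fastforce
  qed simp
  then show "eventually (\<lambda>p. Fmax k p = Max ((\<lambda>i. F i k p) ` I k xb))
      (nhds (ubar, xb))"
  proof (rule eventually_mono)
    fix p assume dominated: "\<forall>i\<in>{1..r k} - I k xb. F i k p < F j k p"
    have "\<exists>j\<in>I k xb. F i k p \<le> F j k p" if "i \<in> {1..r k} - I k xb" for i
      using dominated[rule_format, OF that] j by (auto intro: less_imp_le)
    then show "Fmax k p = Max ((\<lambda>i. F i k p) ` I k xb)"
      unfolding Fmax_def using active_subset active_nonempty[OF k] by (intro Max_image_eq_Max_dominating_subset) auto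
  qed
qed simp

lemma eventually_DF_near:
  assumes "\<eta> > 0"
  shows "eventually (\<lambda>p. \<forall>k\<in>{1..s}. \<forall>i\<in>{1..r k}. norm (DF i k p - DF i k (ubar, xb)) < \<eta>)
           (nhds (ubar, xb))"
proof (intro eventually_ball_finite ballI)
  fix k i assume "k \<in> {1..s}" "i \<in> {1..r k}"
  then have "open {p. norm (DF i k p - DF i k (ubar, xb)) < \<eta>}"
    by (intro open_Collect_less continuous_intros continuous_on_DF)
  then show "eventually (\<lambda>p. norm (DF i k p - DF i k (ubar, xb)) < \<eta>) (nhds (ubar, xb))"
    using eventually_nhds_in_open assms by fastforce
qed simp_all

text \<open>Mean value theorem along the segment from v' to v' + proj k (v - v'), which stays
  within distance d of ubar.\<close>
lemma abs_F_diff_le_dual: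
  assumes k: "k \<in> {1..s}" and i: "i \<in> {1..r k}" and "\<epsilon> > 0"
    and near: "\<And>w. dist w ubar < d \<Longrightarrow> norm (DF i k (w, x) - DF i k (ubar, xb)) \<le> cN * \<epsilon>"
    and v: "dist v ubar < d / 3" and v': "dist v' ubar < d / 3"
  shows "\<bar>F i k (v, x) - F i k (v', x)\<bar> \<le> (dual i k xb + \<epsilon>) * N k (proj k (v - v'))"
proof -
  define h where "h = proj k (v - v')"
  have h: "h \<in> block k" unfolding h_def by (rule blockproj_in_blockspace)
  have "norm h \<le> dist v ubar + dist v' ubar"
    using norm_blockproj_le[of blk k "v - v'"] dist_triangle3[of v v' ubar]
    unfolding h_def by (simp add: dist_norm norm_minus_commute)
  then have "dist (v' + t *\<^sub>R h) ubar < d" if "0 \<le> t" "t \<le> 1" for t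
    using that v v' norm_triangle_ineq[of "v' - ubar" "t *\<^sub>R h"] mult_left_le_one_le[of "norm h" t]
    by (simp add: dist_norm algebra_simps)
  then have "\<bar>F i k (v' + h, x) - F i k (v', x)\<bar> \<le> \<bar>DF i k (ubar, xb) (h, 0)\<bar> + cN * \<epsilon> * norm h"
    by (intro abs_increment_le_near_derivative[OF has_derivative_F[OF k i]] near)
  also have "\<dots> \<le> dual i k xb * N k h + \<epsilon> * N k h"
  proof (rule add_mono)
    show "\<bar>DF i k (ubar, xb) (h, 0)\<bar> \<le> dual i k xb * N k h" by (rule abs_DF_le_dual[OF k h])
    show "cN * \<epsilon> * norm h \<le> \<epsilon> * N k h"
      using mult_left_mono[OF norm_le_block_norm[OF k h], of \<epsilon>] \<open>\<epsilon> > 0\<close> by (simp add: mult_ac)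
  qed
  finally show ?thesis
    unfolding h_def by (simp add: blockproj_add blockproj_diff distrib_right)
qed

lemma local_Fmax_lipschitz:
  fixes \<epsilon> :: real
  assumes "\<epsilon> > 0"
  shows "\<exists>\<rho>>0. \<forall>x v v' k. dist x xb < \<rho> \<longrightarrow> dist v ubar < \<rho> \<longrightarrow> dist v' ubar < \<rho> \<longrightarrow> k \<in> {1..s} \<longrightarrow>
       \<bar>Fmax k (v, x) - Fmax k (v', x)\<bar>
         \<le> (dual_sum k xb + \<epsilon> * r k) * N k (proj k (v - v'))"
proof -
  have "cN * \<epsilon> > 0" using cN_pos assms by simp
  obtain d where "d > 0" and near: "\<And>v x. dist v ubar < d \<Longrightarrow> dist x xb < d \<Longrightarrow>
      (\<forall>k\<in>{1..s}. Fmax k (v, x) = Max ((\<lambda>i. F i k (v, x)) ` I k xb)) \<and>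
      (\<forall>k\<in>{1..s}. \<forall>i\<in>{1..r k}. norm (DF i k (v, x) - DF i k (ubar, xb)) < cN * \<epsilon>)"
    using eventually_nhds_Pair_dist[OF eventually_conj[OF eventually_Fmax_eq_Max_active[of xb]
          eventually_DF_near[OF \<open>cN * \<epsilon> > 0\<close>, of xb]]] by blast
  have "\<bar>Fmax k (v, x) - Fmax k (v', x)\<bar>
          \<le> (dual_sum k xb + \<epsilon> * r k) * N k (proj k (v - v'))"
    if x: "dist x xb < d / 3" and v: "dist v ubar < d / 3" and v': "dist v' ubar < d / 3"
      and k: "k \<in> {1..s}" for x v v' k
  proof -
    have x_near: "dist x xb < d" using x \<open>d > 0\<close> by simp
    have "\<bar>Max ((\<lambda>i. F i k (v, x)) ` I k xb) - Max ((\<lambda>i. F i k (v', x)) ` I k xb)\<bar>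
            \<le> (\<Sum>i\<in>I k xb. \<bar>F i k (v, x) - F i k (v', x)\<bar>)"
      using active_nonempty[OF k] finite_subset[OF active_subset] by (intro abs_Max_image_diff_le_sum) auto
    also have "\<dots> \<le> (\<Sum>i\<in>I k xb. (dual i k xb + \<epsilon>) * N k (proj k (v - v')))"
    proof (intro sum_mono)
      fix i assume "i \<in> I k xb"
      then have i: "i \<in> {1..r k}" using active_subset by blast
      have "norm (DF i k (w, x) - DF i k (ubar, xb)) \<le> cN * \<epsilon>" if "dist w ubar < d" for w
        using near[OF that x_near] k i by (auto intro: less_imp_le)
      then show "\<bar>F i k (v, x) - F i k (v', x)\<bar> \<le> (dual i k xb + \<epsilon>) * N k (proj k (v - v'))"
        by (rule abs_F_diff_le_dual[OF k i assms _ v v'])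
    qed
    also have "\<dots> \<le> (dual_sum k xb + \<epsilon> * r k) * N k (proj k (v - v'))"
      using card_mono[OF _ active_subset, of k] assms block_norm_nonneg[OF k]
      by (auto simp: dual_sum_def sum_distrib_right[symmetric] sum.distrib intro!: mult_right_mono)
    finally show ?thesis
      using near[OF _ x_near] v v' k \<open>d > 0\<close> by simp
  qed
  then show ?thesis using \<open>d > 0\<close> by (intro exI[of _ "d / 3"]) auto
qed

lemma abs_phi_diff_le:
  fixes \<epsilon> :: real
  assumes "\<epsilon> \<ge> 0" and t: "\<forall>k\<in>{1..s}. N k (proj k (v - v')) \<le> t"
    and Fmax_lip: "\<And>k. k \<in> {1..s} \<Longrightarrow>
      \<bar>Fmax k (v, x) - Fmax k (v', x)\<bar>
        \<le> (dual_sum k xb + \<epsilon> * r k) * N k (proj k (v - v'))"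
  shows "\<bar>\<phi> v x - \<phi> v' x\<bar> \<le> ((\<Sum>k\<in>{1..s}. dual_sum k xb) + \<epsilon> * (\<Sum>k\<in>{1..s}. real (r k))) * t"
proof -
  have "\<phi> v x - \<phi> v' x
      = (\<Sum>k\<in>{1..s}. Fmax k (v, x) - Fmax k (v', x))"
    unfolding phi_eq by (simp add: sum_subtractf)
  then have "\<bar>\<phi> v x - \<phi> v' x\<bar>
      \<le> (\<Sum>k\<in>{1..s}. \<bar>Fmax k (v, x) - Fmax k (v', x)\<bar>)"
    by (simp add: sum_abs)
  also have "\<dots> \<le> (\<Sum>k\<in>{1..s}. (dual_sum k xb + \<epsilon> * r k) * t)"
  proof (rule sum_mono)
    fix k assume k: "k \<in> {1..s}"
    have "(dual_sum k xb + \<epsilon> * r k) * N k (proj k (v - v')) \<le> (dual_sum k xb + \<epsilon> * r k) * t"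
      using t k dual_sum_nonneg[OF k] \<open>\<epsilon> \<ge> 0\<close> by (intro mult_left_mono) auto
    then show "\<bar>Fmax k (v, x) - Fmax k (v', x)\<bar>
        \<le> (dual_sum k xb + \<epsilon> * r k) * t"
      using Fmax_lip[OF k] by linarith
  qed
  also have "\<dots> = ((\<Sum>k\<in>{1..s}. dual_sum k xb) + \<epsilon> * (\<Sum>k\<in>{1..s}. real (r k))) * t"
    unfolding sum_distrib_right[symmetric] by (simp add: sum.distrib sum_distrib_left)
  finally show ?thesis .
qed

text \<open>Uniformity in x comes from a Lebesgue number of the cover of the compact set M by the
  neighbourhoods provided by local_Fmax_lipschitz.\<close>
lemma phi_lipschitz_near_minimizers:
  assumes "\<epsilon> > 0"
  shows "\<exists>e>0. \<forall>xm x v v' t. xm \<in> M \<longrightarrow> dist x xm < e \<longrightarrow> dist v ubar < e \<longrightarrow> dist v' ubar < e \<longrightarrow>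
       (\<forall>k\<in>{1..s}. N k (proj k (v - v')) \<le> t) \<longrightarrow> \<bar>\<phi> v x - \<phi> v' x\<bar> \<le> (B + \<epsilon>) * t"
proof -
  define R where "R = (\<Sum>k\<in>{1..s}. real (r k))"
  define \<epsilon>' where "\<epsilon>' = \<epsilon> / (R + 1)"
  have "R \<ge> 0" unfolding R_def by (simp add: sum_nonneg)
  then have \<epsilon>': "\<epsilon>' > 0" "\<epsilon>' * R \<le> \<epsilon>"
    using assms by (auto simp: \<epsilon>'_def field_simps)
  have "\<forall>xb\<in>M. \<exists>\<rho>>0. \<forall>x v v' k. dist x xb < \<rho> \<longrightarrow> dist v ubar < \<rho> \<longrightarrow> dist v' ubar < \<rho> \<longrightarrow>
      k \<in> {1..s} \<longrightarrow> \<bar>Fmax k (v, x) - Fmax k (v', x)\<bar>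
         \<le> (dual_sum k xb + \<epsilon>' * r k) * N k (proj k (v - v'))"
    using local_Fmax_lipschitz[OF \<epsilon>'(1)] by blast
  from compact_uniform_ball_radius[OF minimizers(2) this]
  obtain e where "e > 0" and cover: "\<forall>xm\<in>M. \<exists>xb\<in>M. \<exists>\<rho>. (\<forall>x v v' k. dist x xb < \<rho> \<longrightarrow>
      dist v ubar < \<rho> \<longrightarrow> dist v' ubar < \<rho> \<longrightarrow> k \<in> {1..s} \<longrightarrow>
      \<bar>Fmax k (v, x) - Fmax k (v', x)\<bar>
         \<le> (dual_sum k xb + \<epsilon>' * r k) * N k (proj k (v - v'))) \<and> dist xm xb + e \<le> \<rho>"
    by blast
  have lipschitz: "\<bar>\<phi> v x - \<phi> v' x\<bar> \<le> (B + \<epsilon>) * t"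
    if "xm \<in> M" "dist x xm < e" and v: "dist v ubar < e" and v': "dist v' ubar < e"
      and t: "\<forall>k\<in>{1..s}. N k (proj k (v - v')) \<le> t" for xm x v v' t
  proof -
    obtain xb \<rho> where xb: "xb \<in> M" "dist xm xb + e \<le> \<rho>" and Fmax_lip: "\<forall>x v v' k. dist x xb < \<rho> \<longrightarrow>
      dist v ubar < \<rho> \<longrightarrow> dist v' ubar < \<rho> \<longrightarrow> k \<in> {1..s} \<longrightarrow>
      \<bar>Fmax k (v, x) - Fmax k (v', x)\<bar>
         \<le> (dual_sum k xb + \<epsilon>' * r k) * N k (proj k (v - v'))"
      using cover \<open>xm \<in> M\<close> by blast
    then have "e \<le> \<rho>" "dist x xb < \<rho>"
      using \<open>dist x xm < e\<close> dist_triangle[of x xb xm] zero_le_dist[of xm xb] by linarith+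
    then have "\<bar>\<phi> v x - \<phi> v' x\<bar> \<le> ((\<Sum>k\<in>{1..s}. dual_sum k xb) + \<epsilon>' * R) * t"
      unfolding R_def using \<epsilon>'(1) t v v' Fmax_lip by (intro abs_phi_diff_le) auto
    also have "\<dots> \<le> (B + \<epsilon>) * t"
    proof (rule mult_right_mono)
      obtain k where k: "k \<in> {1..s}" using blocks_nonempty by blast
      show "t \<ge> 0" using t[rule_format, OF k] block_norm_nonneg[OF k, of "v - v'"] by linarith
    qed (use sum_dual_sum_le_B[OF xb(1)] \<epsilon>'(2) in linarith)
    finally show ?thesis .
  qed
  show ?thesis by (intro exI[of _ e] conjI allI impI \<open>e > 0\<close>) (simp add: lipschitz)
qed

lemma mem_U_iff: "v \<in> U \<delta> \<longleftrightarrow> (\<forall>k\<in>{1..s}. N k (proj k (v - ubar)) \<le> \<bar>\<delta>\<bar>)"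
  using U_def blocks_nonempty by (simp add: Max_le_iff)

lemma ubar_in_U: "ubar \<in> U \<delta>"
  unfolding mem_U_iff using is_norm_on_0[OF block_norm subspace_blockspace]
  by (simp add: blockproj_0)

lemma U_0: "U 0 = {ubar}"
proof
  show "U 0 \<subseteq> {ubar}"
  proof
    fix v assume "v \<in> U 0"
    then have "proj k (v - ubar) = 0" if "k \<in> {1..s}" for k
      using that block_norm_nonneg[OF that, of "v - ubar"] unfolding mem_U_iff
      by (metis abs_zero antisym is_norm_on_eq_0[OF block_norm[OF that] subspace_blockspace
          blockproj_in_blockspace])
    then have "v - ubar = 0"
      using sum_blockproj[of "{1..s}" blk "v - ubar"] blk_range by simp
    then show "v \<in> {ubar}" by simp
  qed
  show "{ubar} \<subseteq> U 0" using ubar_in_U by blast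
qed

lemma U_subset_cball: "U \<delta> \<subseteq> cball ubar (real s * \<bar>\<delta>\<bar> / cN)"
proof
  fix v assume v: "v \<in> U \<delta>"
  have "norm (v - ubar) = norm (\<Sum>k\<in>{1..s}. proj k (v - ubar))"
    using sum_blockproj[of "{1..s}" blk "v - ubar"] blk_range by simp
  also have "\<dots> \<le> (\<Sum>k\<in>{1..s}. norm (proj k (v - ubar)))" by (rule norm_sum)
  also have "\<dots> \<le> (\<Sum>k\<in>{1..s}. \<bar>\<delta>\<bar> / cN)"
  proof (rule sum_mono)
    fix k assume k: "k \<in> {1..s}"
    have "cN * norm (proj k (v - ubar)) \<le> \<bar>\<delta>\<bar>"
      using norm_le_block_norm[OF k blockproj_in_blockspace] v k unfolding mem_U_iff
      by (meson order_trans)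
    then show "norm (proj k (v - ubar)) \<le> \<bar>\<delta>\<bar> / cN" using cN_pos by (simp add: field_simps)
  qed
  finally show "v \<in> cball ubar (real s * \<bar>\<delta>\<bar> / cN)"
    by (simp add: dist_norm norm_minus_commute)
qed

text \<open>The radial retraction ubar + (|\<delta>'| / |\<delta>|) (v - ubar) moves v into U \<delta>'.\<close>
lemma exists_close_point_in_U:
  assumes v: "v \<in> U \<delta>"
  shows "\<exists>v'\<in>U \<delta>'. \<forall>k\<in>{1..s}. N k (proj k (v - v')) \<le> \<bar>\<bar>\<delta>\<bar> - \<bar>\<delta>'\<bar>\<bar>"
proof (cases "\<bar>\<delta>\<bar> \<le> \<bar>\<delta>'\<bar>")
  case True
  then have "v \<in> U \<delta>'" using v unfolding mem_U_iff by force
  then show ?thesis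
    using is_norm_on_0[OF block_norm subspace_blockspace] by (intro bexI[of _ v]) (auto simp: blockproj_0)
next
  case False
  define a where "a = \<bar>\<delta>'\<bar> / \<bar>\<delta>\<bar>"
  have a: "0 \<le> a" "a \<le> 1" "a * \<bar>\<delta>\<bar> = \<bar>\<delta>'\<bar>" using False unfolding a_def by auto
  define v' where "v' = ubar + a *\<^sub>R (v - ubar)"
  have scaled: "N k (proj k (c *\<^sub>R (v - ubar))) \<le> c * \<bar>\<delta>\<bar>" if "k \<in> {1..s}" "c \<ge> 0" for k c
    using v that mult_left_mono[of _ "\<bar>\<delta>\<bar>" c]
      is_norm_on_scaleR[OF block_norm[OF that(1)] subspace_blockspace blockproj_in_blockspace]
    unfolding mem_U_iff by (simp add: blockproj_scaleR)
  have shift: "v' - ubar = a *\<^sub>R (v - ubar)" "v - v' = (1 - a) *\<^sub>R (v - ubar)"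
    unfolding v'_def by (simp_all add: algebra_simps)
  have "v' \<in> U \<delta>'"
    unfolding mem_U_iff shift(1) using scaled[OF _ a(1)] a(3) by simp
  moreover have "N k (proj k (v - v')) \<le> \<bar>\<bar>\<delta>\<bar> - \<bar>\<delta>'\<bar>\<bar>" if k: "k \<in> {1..s}" for k
  proof -
    have "N k (proj k (v - v')) \<le> (1 - a) * \<bar>\<delta>\<bar>" unfolding shift(2) using scaled[OF k] a(2) by simp
    also have "\<dots> = \<bar>\<bar>\<delta>\<bar> - \<bar>\<delta>'\<bar>\<bar>" using a(3) False by (simp add: left_diff_distrib)
    finally show ?thesis .
  qed
  ultimately show ?thesis by blast
qed

definition sup_phi :: "real^'n \<Rightarrow> real \<Rightarrow> real" where
  "sup_phi x \<delta> = (SUP v\<in>U \<delta>. \<phi> v x)"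

lemma bdd_above_phi_U: "x \<in> X \<Longrightarrow> bdd_above ((\<lambda>v. \<phi> v x) ` U \<delta>)"
proof -
  let ?K = "cball ubar (real s * \<bar>\<delta>\<bar> / cN) \<times> X"
  assume "x \<in> X"
  have "compact ((\<lambda>p. \<phi> (fst p) (snd p)) ` ?K)"
    using X_cpt by (intro compact_continuous_image continuous_on_phi compact_Times compact_cball)
  then have "bdd_above ((\<lambda>p. \<phi> (fst p) (snd p)) ` ?K)"
    by (intro bounded_imp_bdd_above compact_imp_bounded)
  moreover have "(\<lambda>v. \<phi> v x) ` U \<delta> \<subseteq> (\<lambda>p. \<phi> (fst p) (snd p)) ` ?K"
    using U_subset_cball \<open>x \<in> X\<close> by force
  ultimately show ?thesis by (rule bdd_above_mono)
qed

lemma phi_le_sup_phi: "x \<in> X \<Longrightarrow> v \<in> U \<delta> \<Longrightarrow> \<phi> v x \<le> sup_phi x \<delta>"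
  unfolding sup_phi_def using bdd_above_phi_U by (intro cSUP_upper)

lemma sup_phi_0: "sup_phi x 0 = \<phi> ubar x"
  by (simp add: sup_phi_def U_0)

lemma bdd_below_sup_phi: "bdd_below ((\<lambda>x. sup_phi x \<delta>) ` X)"
proof -
  obtain x0 where "x0 \<in> M" using minimizers by blast
  then have "\<phi> ubar x0 \<le> sup_phi x \<delta>" if "x \<in> X" for x
    using phi_le_sup_phi[OF that ubar_in_U] that M_def by force
  then show ?thesis by (rule bdd_belowI2)
qed

lemma q_eq_INF_sup_phi: "q \<delta> = (INF x\<in>X. sup_phi x \<delta>)"
  using q_def by (simp add: sup_phi_def)

lemma q_le_sup_phi: "x \<in> X \<Longrightarrow> q \<delta> \<le> sup_phi x \<delta>"
  unfolding q_eq_INF_sup_phi using bdd_below_sup_phi by (intro cINF_lower)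

lemma sup_phi_le_sup_phi:
  assumes x: "x \<in> X" and U: "U \<delta> \<subseteq> ball ubar e" "U \<delta>' \<subseteq> ball ubar e"
    and lip: "\<And>v v'. dist v ubar < e \<Longrightarrow> dist v' ubar < e \<Longrightarrow>
      (\<forall>k\<in>{1..s}. N k (proj k (v - v')) \<le> \<bar>\<bar>\<delta>\<bar> - \<bar>\<delta>'\<bar>\<bar>) \<Longrightarrow>
      \<bar>\<phi> v x - \<phi> v' x\<bar> \<le> K * \<bar>\<bar>\<delta>\<bar> - \<bar>\<delta>'\<bar>\<bar>"
  shows "sup_phi x \<delta> \<le> sup_phi x \<delta>' + K * \<bar>\<bar>\<delta>\<bar> - \<bar>\<delta>'\<bar>\<bar>"
  unfolding sup_phi_def[of x \<delta>]
proof (rule cSUP_least)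
  show "U \<delta> \<noteq> {}" using ubar_in_U by blast
  fix v assume v: "v \<in> U \<delta>"
  obtain v' where v': "v' \<in> U \<delta>'" "\<forall>k\<in>{1..s}. N k (proj k (v - v')) \<le> \<bar>\<bar>\<delta>\<bar> - \<bar>\<delta>'\<bar>\<bar>"
    using exists_close_point_in_U[OF v] by blast
  have "\<bar>\<phi> v x - \<phi> v' x\<bar> \<le> K * \<bar>\<bar>\<delta>\<bar> - \<bar>\<delta>'\<bar>\<bar>"
    using U v v' by (intro lip) (auto simp: dist_commute)
  moreover have "\<phi> v' x \<le> sup_phi x \<delta>'" by (rule phi_le_sup_phi[OF x v'(1)])
  ultimately show "\<phi> v x \<le> sup_phi x \<delta>' + K * \<bar>\<bar>\<delta>\<bar> - \<bar>\<delta>'\<bar>\<bar>" by linarith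
qed

lemma U_subset_ball:
  assumes "e > 0" "\<bar>\<delta>\<bar> \<le> cN * e / (2 * real s)"
  shows "U \<delta> \<subseteq> ball ubar e"
proof -
  have "real s > 0" using blocks_nonempty by simp
  have "real s * \<bar>\<delta>\<bar> / cN \<le> real s * (cN * e / (2 * real s)) / cN"
    using assms(2) cN_pos by (intro divide_right_mono mult_left_mono) auto
  also have "\<dots> = e / 2" using cN_pos \<open>real s > 0\<close> by (simp add: field_simps)
  finally have "real s * \<bar>\<delta>\<bar> / cN < e" using \<open>e > 0\<close> by linarith
  then show ?thesis using U_subset_cball[of \<delta>] by (auto simp: dist_commute)
qed

text \<open>An almost minimizer x of q \<delta>' satisfies \<phi> ubar x < \<phi> ubar x0 + \<eta>, hence lies in the
  region where the inner suprema for \<delta> and \<delta>' are comparable.\<close>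
lemma q_le_q_of_sup_phi_le:
  assumes x0: "x0 \<in> M" and "K \<ge> 0" and K\<rho>: "K * \<rho> < \<eta>" and \<delta>: "\<bar>\<delta>\<bar> \<le> \<rho>" "\<bar>\<delta>'\<bar> \<le> \<rho>"
    and close: "\<And>x. x \<in> X \<Longrightarrow> \<phi> ubar x < \<phi> ubar x0 + \<eta> \<Longrightarrow> near x"
    and sup_lip: "\<And>x \<delta> \<delta>'. x \<in> X \<Longrightarrow> near x \<Longrightarrow> \<bar>\<delta>\<bar> \<le> \<rho> \<Longrightarrow> \<bar>\<delta>'\<bar> \<le> \<rho> \<Longrightarrow>
      sup_phi x \<delta> \<le> sup_phi x \<delta>' + K * \<bar>\<bar>\<delta>\<bar> - \<bar>\<delta>'\<bar>\<bar>"
  shows "q \<delta> \<le> q \<delta>' + K * \<bar>\<delta> - \<delta>'\<bar>"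
proof (rule field_le_epsilon)
  fix \<gamma> :: real assume "\<gamma> > 0"
  have "x0 \<in> X" using x0 minimizers by blast
  have "K * \<bar>\<delta>'\<bar> \<le> K * \<rho>" using \<delta>(2) \<open>K \<ge> 0\<close> by (rule mult_left_mono)
  moreover have "K * \<bar>\<delta>'\<bar> \<ge> 0" using \<open>K \<ge> 0\<close> by simp
  ultimately have "near x0" using close[OF \<open>x0 \<in> X\<close>] K\<rho> by simp
  have "(INF x\<in>X. sup_phi x \<delta>') < q \<delta>' + min \<gamma> (\<eta> - K * \<rho>)"
    using \<open>\<gamma> > 0\<close> K\<rho> q_eq_INF_sup_phi by simp
  then obtain x where x: "x \<in> X" "sup_phi x \<delta>' < q \<delta>' + min \<gamma> (\<eta> - K * \<rho>)"
    using cINF_less_iff[OF X_ne bdd_below_sup_phi] by blast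
  have "q \<delta>' \<le> sup_phi x0 \<delta>'" by (rule q_le_sup_phi[OF \<open>x0 \<in> X\<close>])
  also have "\<dots> \<le> sup_phi x0 0 + K * \<bar>\<bar>\<delta>'\<bar> - \<bar>0\<bar>\<bar>"
    using \<delta> by (intro sup_lip[OF \<open>x0 \<in> X\<close> \<open>near x0\<close> \<delta>(2)]) auto
  also have "\<dots> = \<phi> ubar x0 + K * \<bar>\<delta>'\<bar>" by (simp add: sup_phi_0)
  finally have "\<phi> ubar x < \<phi> ubar x0 + \<eta>"
    using \<open>K * \<bar>\<delta>'\<bar> \<le> K * \<rho>\<close> phi_le_sup_phi[OF x(1) ubar_in_U, of \<delta>'] x(2) by linarith
  then have "q \<delta> \<le> sup_phi x \<delta>' + K * \<bar>\<bar>\<delta>\<bar> - \<bar>\<delta>'\<bar>\<bar>"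
    using q_le_sup_phi[OF x(1), of \<delta>] sup_lip[OF x(1) close[OF x(1)] \<delta>] by linarith
  moreover have "K * \<bar>\<bar>\<delta>\<bar> - \<bar>\<delta>'\<bar>\<bar> \<le> K * \<bar>\<delta> - \<delta>'\<bar>"
    using \<open>K \<ge> 0\<close> by (intro mult_left_mono) auto
  ultimately show "q \<delta> \<le> q \<delta>' + K * \<bar>\<delta> - \<delta>'\<bar> + \<gamma>" using x(2) by linarith
qed

lemma q_lipschitz_near_0:
  assumes "\<epsilon> > 0"
  shows "\<exists>\<rho>>0. \<forall>\<delta> \<delta>'. \<bar>\<delta>\<bar> \<le> \<rho> \<longrightarrow> \<bar>\<delta>'\<bar> \<le> \<rho> \<longrightarrow> q \<delta> - q \<delta>' \<le> (B + \<epsilon>) * \<bar>\<delta> - \<delta>'\<bar>"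
proof -
  define K where "K = B + \<epsilon>"
  have "K \<ge> 0" unfolding K_def using B_nonneg assms by simp
  obtain e where "e > 0" and lip: "\<forall>xm x v v' t. xm \<in> M \<longrightarrow> dist x xm < e \<longrightarrow> dist v ubar < e \<longrightarrow>
      dist v' ubar < e \<longrightarrow> (\<forall>k\<in>{1..s}. N k (proj k (v - v')) \<le> t) \<longrightarrow> \<bar>\<phi> v x - \<phi> v' x\<bar> \<le> K * t"
    using phi_lipschitz_near_minimizers[OF assms] unfolding K_def by blast
  obtain x0 where x0: "x0 \<in> M" using minimizers by blast
  then have "x0 \<in> X" "\<forall>y\<in>X. \<phi> ubar x0 \<le> \<phi> ubar y" unfolding M_def by blast+
  from almost_minimizers_near_minimizers[OF X_cpt continuous_on_phi_snd \<open>e > 0\<close> this]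
  obtain \<eta> where "\<eta> > 0" and close: "\<forall>x\<in>X. \<phi> ubar x < \<phi> ubar x0 + \<eta> \<longrightarrow> (\<exists>xm\<in>M. dist x xm < e)"
    unfolding M_def[symmetric] by blast
  define \<rho> where "\<rho> = min (cN * e / (2 * real s)) (\<eta> / (2 * (K + 1)))"
  have "\<rho> > 0" unfolding \<rho>_def using cN_pos blocks_nonempty \<open>e > 0\<close> \<open>\<eta> > 0\<close> \<open>K \<ge> 0\<close> by simp
  have "K * \<rho> \<le> (K + 1) * (\<eta> / (2 * (K + 1)))"
    using \<open>K \<ge> 0\<close> \<open>\<rho> > 0\<close> unfolding \<rho>_def by (intro mult_mono) auto
  also have "\<dots> = \<eta> / 2" using \<open>K \<ge> 0\<close> by (simp add: field_simps)
  finally have K\<rho>: "K * \<rho> < \<eta>" using \<open>\<eta> > 0\<close> by simp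
  have sup_lip: "sup_phi x \<delta> \<le> sup_phi x \<delta>' + K * \<bar>\<bar>\<delta>\<bar> - \<bar>\<delta>'\<bar>\<bar>"
    if "x \<in> X" "\<exists>xm\<in>M. dist x xm < e" "\<bar>\<delta>\<bar> \<le> \<rho>" "\<bar>\<delta>'\<bar> \<le> \<rho>" for x \<delta> \<delta>'
  proof (rule sup_phi_le_sup_phi[OF that(1)])
    show "U \<delta> \<subseteq> ball ubar e" "U \<delta>' \<subseteq> ball ubar e"
      using that(3,4) U_subset_ball[OF \<open>e > 0\<close>] unfolding \<rho>_def by simp_all
    fix v v' assume "dist v ubar < e" "dist v' ubar < e"
      "\<forall>k\<in>{1..s}. N k (proj k (v - v')) \<le> \<bar>\<bar>\<delta>\<bar> - \<bar>\<delta>'\<bar>\<bar>"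
    then show "\<bar>\<phi> v x - \<phi> v' x\<bar> \<le> K * \<bar>\<bar>\<delta>\<bar> - \<bar>\<delta>'\<bar>\<bar>" using lip that(2) by blast
  qed
  have "q \<delta> - q \<delta>' \<le> K * \<bar>\<delta> - \<delta>'\<bar>" if "\<bar>\<delta>\<bar> \<le> \<rho>" "\<bar>\<delta>'\<bar> \<le> \<rho>" for \<delta> \<delta>'
    using q_le_q_of_sup_phi_le[OF x0 \<open>K \<ge> 0\<close> K\<rho> that, of "\<lambda>x. \<exists>xm\<in>M. dist x xm < e"]
      close sup_lip by fastforce
  then show ?thesis using \<open>\<rho> > 0\<close> unfolding K_def by blast
qed

lemma loc_lipschitz_q: "loc_lipschitz_at q 0"
proof -
  obtain \<rho> where "\<rho> > 0" and lip: "\<And>\<delta> \<delta>'. \<bar>\<delta>\<bar> \<le> \<rho> \<Longrightarrow> \<bar>\<delta>'\<bar> \<le> \<rho> \<Longrightarrow> q \<delta> - q \<delta>' \<le> (B + 1) * \<bar>\<delta> - \<delta>'\<bar>"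
    using q_lipschitz_near_0[of 1] by auto
  show ?thesis
    using B_nonneg \<open>\<rho> > 0\<close> lip by (intro loc_lipschitz_atI[of "B + 1" \<rho>]) (auto simp: dist_real_def)
qed

lemma lip_mod_q: "lip_mod q 0 \<le> ereal B"
proof (rule lip_mod_le)
  fix \<epsilon> :: real assume "\<epsilon> > 0"
  then show "\<exists>\<rho>>0. \<forall>z z'. dist z 0 \<le> \<rho> \<longrightarrow> dist z' 0 \<le> \<rho> \<longrightarrow> q z - q z' \<le> (B + \<epsilon>) * dist z z'"
    using q_lipschitz_near_0 by (simp add: dist_real_def)
qed

lemma B_eq_SUP_norm_grad:
  assumes "\<forall>k\<in>{1..s}. \<forall>w\<in>block k. N k w = norm w"
  shows "B = (SUP xb\<in>M. \<Sum>k\<in>{1..s}. \<Sum>i\<in>I k xb. norm (grad (\<lambda>v. f i k (proj k v) xb) ubar))"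
  unfolding B_def
proof (intro SUP_cong refl sum.cong)
  fix xb k i assume k: "k \<in> {1..s}" and "i \<in> I k xb"
  then have i: "i \<in> {1..r k}" using active_subset by blast
  let ?G = "\<lambda>v. f i k (proj k v) xb"
  have der: "(?G has_derivative (\<lambda>w. DF i k (ubar, xb) (w, 0))) (at ubar)"
    using has_derivative_partial_fst[OF has_derivative_F[OF k i]] by simp
  have "{w\<in>block k. N k w \<le> 1} = {w\<in>block k. norm w \<le> 1}" using assms k by auto
  moreover have "grad ?G ubar \<in> block k" by (rule grad_in_blockspace[OF der]) simp
  ultimately show "(SUP w\<in>{w\<in>block k. N k w \<le> 1}. \<bar>frechet_derivative ?G (at ubar) w\<bar>)
      = norm (grad ?G ubar)"
    using SUP_abs_inner_unit_ball_subspace[OF subspace_blockspace]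
    by (simp add: frechet_derivative_eq_inner_grad[OF der])
qed

end

theorem corollary1:
  fixes f0 :: "real^'n \<Rightarrow> real"
    and X :: "(real^'n) set"
    and s :: nat and r :: "nat \<Rightarrow> nat"
    and blk :: "'m::finite \<Rightarrow> nat"
    and f :: "nat \<Rightarrow> nat \<Rightarrow> real^'m \<Rightarrow> real^'n \<Rightarrow> real"
    and ubar :: "real^'m"
    and N :: "nat \<Rightarrow> real^'m \<Rightarrow> real"
    and U :: "real \<Rightarrow> (real^'m) set"
    and \<phi> :: "real^'m \<Rightarrow> real^'n \<Rightarrow> real"
    and q :: "real \<Rightarrow> real"
    and M :: "(real^'n) set"
    and I :: "nat \<Rightarrow> real^'n \<Rightarrow> nat set"
    and B :: real
  assumes f0_lip: "loc_lipschitz f0"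
    and X_ne: "X \<noteq> {}" and X_cpt: "compact X"
    and blk_range: "\<forall>j. blk j \<in> {1..s}"
    and r_pos: "\<forall>k\<in>{1..s}. r k \<ge> 1"
    and f_C1: "\<forall>k\<in>{1..s}. \<forall>i\<in>{1..r k}.
                 C1 (\<lambda>p::(real^'m) \<times> (real^'n). f i k (blockproj blk k (fst p)) (snd p))"
    and N_norm: "\<forall>k\<in>{1..s}. is_norm_on (blockspace blk k) (N k)"
    and U_def: "\<forall>\<delta>. U \<delta> = {v. Max ((\<lambda>k. N k (blockproj blk k (v - ubar))) ` {1..s}) \<le> \<bar>\<delta>\<bar>}"
    and \<phi>_def: "\<forall>v x. \<phi> v x = f0 x + (\<Sum>k\<in>{1..s}. Max ((\<lambda>i. f i k (blockproj blk k v) x) ` {1..r k}))"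
    and q_def: "\<forall>\<delta>. q \<delta> = (INF x\<in>X. SUP v\<in>U \<delta>. \<phi> v x)"
    and M_def: "M = {x\<in>X. \<forall>y\<in>X. \<phi> ubar x \<le> \<phi> ubar y}"
    and I_def: "\<forall>k x. I k x = {i\<in>{1..r k}. f i k (blockproj blk k ubar) x
                          = Max ((\<lambda>j. f j k (blockproj blk k ubar) x) ` {1..r k})}"
    and B_def: "B = (SUP xb\<in>M. \<Sum>k\<in>{1..s}. \<Sum>i\<in>I k xb.
                   (SUP w\<in>{w\<in>blockspace blk k. N k w \<le> 1}.
                      \<bar>frechet_derivative (\<lambda>v. f i k (blockproj blk k v) xb) (at ubar) w\<bar>))"
  shows "loc_lipschitz_at q 0 \<and> lip_mod q 0 \<le> ereal B \<and>
         ((\<forall>k\<in>{1..s}. \<forall>w\<in>blockspace blk k. N k w = norm w) \<longrightarrow>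
            B = (SUP xb\<in>M. \<Sum>k\<in>{1..s}. \<Sum>i\<in>I k xb.
                   norm (grad (\<lambda>v. f i k (blockproj blk k v) xb) ubar)))"
proof -
  interpret robust_minmax f0 X s r blk f ubar N U \<phi> q M I B
    by unfold_locales (fact assms)+
  show ?thesis using loc_lipschitz_q lip_mod_q B_eq_SUP_norm_grad by blast
qed

end
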